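(* Let $L^{(2)}_N$ be the number of leaves of the $B$-tree of order $5$ (i.e. $m=2$) obtained by inserting the keys $\pi(1),\dots,\pi(N)$ successively into an empty tree, where $\pi$ is a uniformly random permutation in $S_N$. Then \[ \mathbb E\big(L^{(2)}_N\big)=\frac{10(N+1)}{37}+O\big(N^{-13/2}\big)\qquad (N\to\infty). \]
   Context: A $B$-tree of order $2m+1$ is a rooted plane search tree whose nodes contain pairwise distinct keys in increasing left-to-right order (a non-leaf node with $k$ keys has $k+1$ children), every non-root node has between $m$ and $2m$ keys, the root between $1$ and $2m$, and all leaves have equal depth. Insertion: place the new key in the appropriate leaf; whenever a node has $2m+1$ keys, split it, moving the median key up into the parent and forming two nodes from the $m$ smallest and the $m$ largest keys (creating a new one-key root if the root splits). *)

theory Defs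
  imports Main "HOL-Library.Landau_Symbols" "HOL-Combinatorics.Permutations"
begin

text \<open>B-trees: a node carries its sorted key list and its list of children
  (empty list of children = leaf).\<close>
datatype 'a btree = BNode "'a list" "'a btree list"

text \<open>Result of inserting into a subtree: either a single node, or a node that
  overflowed and was split into (left part, median key, right part).\<close>
datatype 'a ins_res = Keep "'a btree" | Split "'a btree" 'a "'a btree"

definition split_node :: "nat \<Rightarrow> 'a list \<Rightarrow> 'a btree list \<Rightarrow> 'a ins_res" where
  "split_node m ks ts =
     (if length ks \<le> 2*m then Keep (BNode ks ts)
      else Split (BNode (take m ks) (take (m+1) ts)) (ks ! m)
                 (BNode (drop (m+1) ks) (drop (m+1) ts)))"

function ins :: "nat \<Rightarrow> 'a::linorder \<Rightarrow> 'a btree \<Rightarrow> 'a ins_res" where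
  "ins m x (BNode ks ts) =
     (if ts = [] then split_node m (insort x ks) []
      else (let i = length (filter (\<lambda>k. k < x) ks) in
        if i < length ts then
          (case ins m x (ts ! i) of
             Keep t \<Rightarrow> Keep (BNode ks (ts[i := t]))
           | Split l a r \<Rightarrow>
               split_node m (take i ks @ a # drop i ks) (take i ts @ l # r # drop (i+1) ts))
        else Keep (BNode ks ts)))"
  by pat_completeness auto
termination
  apply (relation "measure (\<lambda>(m, x, t). size t)")
  apply (auto dest!: nth_mem)
  by (metis le_imp_less_Suc order_refl size_list_estimation' trans_le_add2)

definition insert_key :: "nat \<Rightarrow> 'a::linorder \<Rightarrow> 'a btree \<Rightarrow> 'a btree" where
  "insert_key m x t = (case ins m x t of Keep t' \<Rightarrow> t' | Split l a r \<Rightarrow> BNode [a] [l, r])"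

definition build :: "nat \<Rightarrow> 'a::linorder list \<Rightarrow> 'a btree" where
  "build m xs = fold (insert_key m) xs (BNode [] [])"

fun leaves :: "'a btree \<Rightarrow> nat" where
  "leaves (BNode ks ts) = (if ts = [] then 1 else sum_list (map leaves ts))"

text \<open>Expected number of leaves of the B-tree of order 2m+1 built from
  \<pi>(1),...,\<pi>(N) for uniformly random \<pi> in S_N.\<close>
definition expected_leaves :: "nat \<Rightarrow> nat \<Rightarrow> real" where
  "expected_leaves m N =
     (\<Sum>\<pi>\<in>{\<pi>. \<pi> permutes {1..N}}. real (leaves (build m (map \<pi> [1..<N+1])))) / fact N"

end

theory Submission
  imports Defs "HOL-Combinatorics.Multiset_Permutations"
begin

text \<open>
  Describe a B-tree by the sizes of its leaves from left to right. Insertion commutes with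
  order-preserving relabelling of keys, so the tree built from \<open>\<pi>(1), \<dots>, \<pi>(N)\<close> has the shape
  of the tree built from their relative order, a uniform permutation of \<open>N\<close> elements, and
  the key \<open>\<pi>(N + 1)\<close> independently falls into each of the \<open>N + 1\<close> gaps between the previous keys
  with equal probability. A leaf with \<open>k\<close> keys contains \<open>k + 1\<close> gaps; it becomes a leaf with
  \<open>k + 1\<close> keys, or two leaves with \<open>m\<close> keys if \<open>k = 2m\<close>. Once \<open>N > 2m\<close> all leaves have between
  \<open>m\<close> and \<open>2m\<close> keys, so the expected numbers \<open>E\<^sub>k(N)\<close> of leaves with \<open>k\<close> keys satisfy a linear
  recurrence \<open>E(N + 1) = E(N) + A E(N) / (N + 1)\<close>, and \<open>\<Sum>\<^sub>k (k + 1) E\<^sub>k(N) = N + 1\<close>.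
  For \<open>m = 2\<close> the deviation from the fixed point \<open>(5, 3, 2) (N + 1) / 37\<close> is governed by two
  coordinates on which a positive definite quadratic form shrinks by exactly the factor
  \<open>1 - 13/(N + 1) + 60/(N + 1)\<^sup>2\<close> per step; this gives decay of order \<open>N^(-13)\<close> for the form and
  of order \<open>N^(-13/2)\<close> for the deviation of the expected number of leaves.
\<close>

section \<open>Interleaving lists\<close>

fun interleave :: "'a list list \<Rightarrow> 'a list \<Rightarrow> 'a list" where
  "interleave [] ks = []"
| "interleave (f # fs) [] = f"
| "interleave (f # fs) (k # ks) = f @ k # interleave fs ks"

definition interleave_pairs :: "'a list list \<Rightarrow> 'a list \<Rightarrow> 'a list" where
  "interleave_pairs F ks = concat (map (\<lambda>(f, k). f @ [k]) (zip F ks))"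

lemma interleave_pairs_simps [simp]:
  "interleave_pairs [] ks = []" "interleave_pairs F [] = []"
  "interleave_pairs (f # F) (k # ks) = f @ k # interleave_pairs F ks"
  by (auto simp: interleave_pairs_def)

lemma length_interleave_pairs:
  "length F = length ks \<Longrightarrow> length (interleave_pairs F ks) = length (concat F) + length ks"
  by (induction F ks rule: list_induct2) auto

lemma set_interleave_pairs:
  "length F = length ks \<Longrightarrow> set (interleave_pairs F ks) = set (concat F) \<union> set ks"
  by (induction F ks rule: list_induct2) auto

lemma interleave_pairs_snoc:
  "length F = length ks \<Longrightarrow> interleave_pairs (F @ [f]) (ks @ [k]) = interleave_pairs F ks @ f @ [k]"
  by (induction F ks rule: list_induct2) auto

lemma length_interleave:
  "length F = length ks + 1 \<Longrightarrow> length (interleave F ks) = length (concat F) + length ks"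
  by (induction F ks rule: interleave.induct) auto

lemma set_interleave:
  "length F = length ks + 1 \<Longrightarrow> set (interleave F ks) = set (concat F) \<union> set ks"
  by (induction F ks rule: interleave.induct) auto

lemma interleave_Cons: "interleave (f # F) ks = f @ interleave ([] # F) ks"
  by (cases ks) auto

lemma interleave_append:
  "length F = length ks \<Longrightarrow> interleave (F @ G) (ks @ ls) = interleave_pairs F ks @ interleave G ls"
  by (induction F ks rule: list_induct2) auto

lemma interleave_split_nth:
  "length F = length ks + 1 \<Longrightarrow> i < length ks \<Longrightarrow>
   interleave F ks = interleave (take (i + 1) F) (take i ks) @ ks ! i # interleave (drop (i + 1) F) (drop (i + 1) ks)"
proof (induction i arbitrary: F ks)
  case 0
  then show ?case by (cases F; cases ks) auto
next
  case (Suc i)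
  then show ?case by (cases F; cases ks) auto
qed

lemma interleave_at_nth:
  assumes "length ts = length ks + 1" "j \<le> length ks"
  shows "interleave (map f ts) ks = interleave_pairs (map f (take j ts)) (take j ks) @ f (ts ! j) @
     interleave ([] # map f (drop (Suc j) ts)) (drop j ks)"
proof -
  have "map f ts = map f (take j ts) @ f (ts ! j) # map f (drop (Suc j) ts)"
    using assms by (metis id_take_nth_drop le_imp_less_Suc list.map(2) map_append Suc_eq_plus1)
  then have "interleave (map f ts) ks =
      interleave (map f (take j ts) @ f (ts ! j) # map f (drop (Suc j) ts)) (take j ks @ drop j ks)"
    by simp
  also have "\<dots> = interleave_pairs (map f (take j ts)) (take j ks) @
      interleave (f (ts ! j) # map f (drop (Suc j) ts)) (drop j ks)"
    using assms by (intro interleave_append) simp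
  finally show ?thesis by (simp add: interleave_Cons[of "f (ts ! j)"])
qed

lemma map_interleave: "map h (interleave F ks) = interleave (map (map h) F) (map h ks)"
  by (induction F ks rule: interleave.induct) auto

lemma interleave_interleave:
  assumes "length ts = length ks + 1" "\<forall>t\<in>set ts. length (F t) = length (S t) + 1"
  shows "interleave (map (\<lambda>t. interleave (F t) (S t)) ts) ks =
         interleave (concat (map F ts)) (interleave (map S ts) ks)"
  using assms
proof (induction ks arbitrary: ts)
  case Nil
  then show ?case by (cases ts) auto
next
  case (Cons k ks)
  then obtain t ts' where ts: "ts = t # ts'" by (cases ts) auto
  with Cons.prems have "length (F t) = length (S t) + 1" by simp
  then obtain F0 l where Ft: "F t = F0 @ [l]" and lengths: "length F0 = length (S t)"
    by (cases "F t" rule: rev_cases) auto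
  have "interleave (F t) (S t) = interleave_pairs F0 (S t) @ l"
    using interleave_append[OF lengths, of "[l]" "[]"] Ft by simp
  moreover have "interleave (F t @ concat (map F ts')) (S t @ k # interleave (map S ts') ks) =
      interleave_pairs F0 (S t) @ l @ k # interleave (concat (map F ts')) (interleave (map S ts') ks)"
    using interleave_append[OF lengths, of "l # concat (map F ts')"] Ft by simp
  ultimately show ?case
    using Cons ts by simp
qed

lemma sorted_interleave_keys:
  "length F = length ks + 1 \<Longrightarrow> sorted_wrt (<) (interleave F ks) \<Longrightarrow> sorted_wrt (<) ks"
  by (induction F ks rule: interleave.induct) (auto simp: sorted_wrt_append set_interleave)


section \<open>Leaves, separators and in-order traversal\<close>

fun leaf_keys :: "'a btree \<Rightarrow> 'a list list" where
  "leaf_keys (BNode ks ts) = (if ts = [] then [ks] else concat (map leaf_keys ts))"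

fun separators :: "'a btree \<Rightarrow> 'a list" where
  "separators (BNode ks ts) = (if ts = [] then [] else interleave (map separators ts) ks)"

fun inorder :: "'a btree \<Rightarrow> 'a list" where
  "inorder (BNode ks ts) = (if ts = [] then ks else interleave (map inorder ts) ks)"

fun wf_btree :: "'a btree \<Rightarrow> bool" where
  "wf_btree (BNode ks ts) \<longleftrightarrow> ts = [] \<or> (length ts = length ks + 1 \<and> (\<forall>t\<in>set ts. wf_btree t))"

lemma leaves_eq_length_leaf_keys: "leaves t = length (leaf_keys t)"
  by (induction t) (simp add: length_concat cong: map_cong)

lemma length_leaf_keys: "wf_btree t \<Longrightarrow> length (leaf_keys t) = length (separators t) + 1"
proof (induction t)
  case (BNode ks ts)
  show ?case
  proof (cases "ts = []")
    case False
    with BNode have lengths: "length ts = length ks + 1"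
      and "length (concat (map leaf_keys ts)) = (\<Sum>t\<leftarrow>ts. Suc (length (separators t)))"
      by (auto simp: length_concat cong: map_cong)
    with False show ?thesis by (simp add: length_interleave sum_list_Suc length_concat o_def)
  qed simp
qed

lemma inorder_eq_interleave: "wf_btree t \<Longrightarrow> inorder t = interleave (leaf_keys t) (separators t)"
proof (induction t)
  case (BNode ks ts)
  show ?case
  proof (cases "ts = []")
    case False
    with BNode.prems have "length ts = length ks + 1" and wf: "\<forall>t\<in>set ts. wf_btree t"
      by auto
    with False BNode.IH show ?thesis
      by (simp add: interleave_interleave length_leaf_keys cong: map_cong)
  qed simp
qed

lemma set_separators: "wf_btree t \<Longrightarrow> set (separators t) \<subseteq> set (inorder t)"
  by (simp add: inorder_eq_interleave set_interleave length_leaf_keys)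

section \<open>Insertion\<close>

definition rank :: "'a::linorder \<Rightarrow> 'a list \<Rightarrow> nat" where
  "rank x ks = length (filter (\<lambda>k. k < x) ks)"

lemma nth_less_iff_less_rank:
  "sorted_wrt (<) ks \<Longrightarrow> i < length ks \<Longrightarrow> ks ! i < x \<longleftrightarrow> i < rank x ks"
proof (induction ks arbitrary: i)
  case (Cons k ks)
  show ?case
  proof (cases "k < x")
    case False
    with Cons.prems have "\<forall>y\<in>set ks. \<not> y < x" by (auto dest: order.strict_trans)
    with False Cons.prems(2) show ?thesis
      by (auto simp: rank_def filter_empty_conv nth_Cons split: nat.split)
  qed (use Cons in \<open>auto simp: rank_def nth_Cons split: nat.split\<close>)
qed simp

lemma insort_between:
  "\<forall>a\<in>set A. a < x \<Longrightarrow> \<forall>b\<in>set B. x < b \<Longrightarrow> insort x (A @ C @ B) = A @ insort x C @ B"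
proof (induction A)
  case Nil
  then show ?case by (induction C) (auto simp: insort_is_Cons less_imp_le)
qed auto

text \<open>Leaf sizes after a key is inserted into leaf \<open>i\<close>; a full leaf splits into two leaves of \<open>m\<close> keys.\<close>
definition grow_leaf :: "nat \<Rightarrow> nat list \<Rightarrow> nat \<Rightarrow> nat list" where
  "grow_leaf m ns i =
     take i ns @ (if ns ! i < 2 * m then [Suc (ns ! i)] else [m, ns ! i - m]) @ drop (Suc i) ns"

lemma grow_leaf_append:
  "i < length ns \<Longrightarrow> grow_leaf m (A @ ns @ C) (length A + i) = A @ grow_leaf m ns i @ C"
  by (simp add: grow_leaf_def nth_append)

fun res_nodes :: "'a ins_res \<Rightarrow> 'a btree list" where
  "res_nodes (Keep t) = [t]"
| "res_nodes (Split l a r) = [l, r]"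

fun inorder_res :: "'a ins_res \<Rightarrow> 'a list" where
  "inorder_res (Keep t) = inorder t"
| "inorder_res (Split l a r) = inorder l @ a # inorder r"

lemma split_node_internal:
  assumes "ts \<noteq> []" "wf_btree (BNode ks ts)"
  shows "(\<forall>t\<in>set (res_nodes (split_node m ks ts)). wf_btree t) \<and>
    inorder_res (split_node m ks ts) = inorder (BNode ks ts) \<and>
    concat (map leaf_keys (res_nodes (split_node m ks ts))) = leaf_keys (BNode ks ts)"
proof (cases "length ks \<le> 2 * m")
  case False
  from assms have lengths: "length ts = length ks + 1" and wf: "\<forall>t\<in>set ts. wf_btree t" by auto
  with False have "take (m + 1) ts \<noteq> []" "drop (m + 1) ts \<noteq> []" by auto
  moreover have "inorder (BNode ks ts) = interleave (take (m + 1) (map inorder ts)) (take m ks) @ ks ! m #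
      interleave (drop (m + 1) (map inorder ts)) (drop (m + 1) ks)"
    using interleave_split_nth[of "map inorder ts" ks m] assms lengths False by simp
  moreover have "leaf_keys (BNode ks ts) =
      concat (map leaf_keys (take (m + 1) ts)) @ concat (map leaf_keys (drop (m + 1) ts))"
    using assms by (metis append_take_drop_id concat_append leaf_keys.simps map_append)
  ultimately show ?thesis
    using False lengths wf by (auto simp: split_node_def take_map drop_map dest: in_set_takeD in_set_dropD)
qed (use assms in \<open>simp add: split_node_def\<close>)

lemma inorder_around_child:
  assumes "wf_btree (BNode ks ts)" "ts \<noteq> []"
    "sorted_wrt (<) (inorder (BNode ks ts))" "x \<notin> set (inorder (BNode ks ts))"
  defines "j \<equiv> rank x ks"
  defines "P \<equiv> interleave_pairs (map inorder (take j ts)) (take j ks)"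
    and "B \<equiv> interleave ([] # map inorder (drop (Suc j) ts)) (drop j ks)"
  shows "inorder (BNode ks ts) = P @ inorder (ts ! j) @ B"
    and "\<forall>p\<in>set P. p < x" and "\<forall>b\<in>set B. x < b"
proof -
  from assms(1,2) have lengths: "length ts = length ks + 1" by auto
  have "j \<le> length ks" by (simp add: j_def rank_def)
  show decomp: "inorder (BNode ks ts) = P @ inorder (ts ! j) @ B"
    using interleave_at_nth[OF lengths \<open>j \<le> length ks\<close>] \<open>ts \<noteq> []\<close> by (simp add: P_def B_def)
  have sorted_ks: "sorted_wrt (<) ks"
    using assms(2,3) lengths sorted_interleave_keys[of "map inorder ts" ks] by simp
  show "\<forall>p\<in>set P. p < x"
  proof (cases j)
    case (Suc i)
    with \<open>j \<le> length ks\<close> lengths have "P = interleave_pairs (map inorder (take i ts)) (take i ks) @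
        inorder (ts ! i) @ [ks ! i]"
      by (simp add: P_def take_Suc_conv_app_nth interleave_pairs_snoc)
    moreover have "ks ! i < x"
      using nth_less_iff_less_rank[OF sorted_ks] Suc \<open>j \<le> length ks\<close> by (simp add: j_def)
    ultimately show ?thesis
      using assms(3) decomp by (auto simp: sorted_wrt_append dest: order.strict_trans)
  qed (simp add: P_def)
  show "\<forall>b\<in>set B. x < b"
  proof (cases "j < length ks")
    case True
    then have B: "B = ks ! j # interleave (map inorder (drop (Suc j) ts)) (drop (Suc j) ks)"
      unfolding B_def by (subst Cons_nth_drop_Suc[symmetric, OF True]) simp
    have "\<not> ks ! j < x"
      using nth_less_iff_less_rank[OF sorted_ks True] by (simp add: j_def)
    moreover have "x \<noteq> ks ! j" using assms(4) decomp B by auto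
    ultimately show ?thesis
      using assms(3) decomp B by (auto simp: sorted_wrt_append)
  qed (simp add: B_def)
qed

lemma rank_separators_child:
  assumes "wf_btree (BNode ks ts)" "ts \<noteq> []"
    "sorted_wrt (<) (inorder (BNode ks ts))" "x \<notin> set (inorder (BNode ks ts))"
  defines "j \<equiv> rank x ks"
  shows "rank x (separators (BNode ks ts)) =
    length (concat (map leaf_keys (take j ts))) + rank x (separators (ts ! j))"
proof -
  from assms(1,2) have lengths: "length ts = length ks + 1" and wf_children: "\<forall>t\<in>set ts. wf_btree t"
    by auto
  have "j \<le> length ks" by (simp add: j_def rank_def)
  define Ps where "Ps = interleave_pairs (map separators (take j ts)) (take j ks)"
  define Bs where "Bs = interleave ([] # map separators (drop (Suc j) ts)) (drop j ks)"
  note around = inorder_around_child[OF assms(1-4), folded j_def]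
  have "separators (BNode ks ts) = Ps @ separators (ts ! j) @ Bs"
    using interleave_at_nth[OF lengths \<open>j \<le> length ks\<close>] \<open>ts \<noteq> []\<close> by (simp add: Ps_def Bs_def)
  moreover have "set Ps \<subseteq> set (interleave_pairs (map inorder (take j ts)) (take j ks))"
  proof -
    have "\<And>t. t \<in> set (take j ts) \<Longrightarrow> set (separators t) \<subseteq> set (inorder t)"
      using wf_children set_separators by (meson in_set_takeD)
    with \<open>j \<le> length ks\<close> lengths show ?thesis
      by (simp add: Ps_def set_interleave_pairs) blast
  qed
  then have "\<forall>p\<in>set Ps. p < x" using around(2) by blast
  moreover have "set Bs \<subseteq> set (interleave ([] # map inorder (drop (Suc j) ts)) (drop j ks))"
  proof -
    have "\<And>t. t \<in> set (drop (Suc j) ts) \<Longrightarrow> set (separators t) \<subseteq> set (inorder t)"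
      using wf_children set_separators by (meson in_set_dropD)
    with \<open>j \<le> length ks\<close> lengths show ?thesis
      by (simp add: Bs_def set_interleave) blast
  qed
  then have "\<forall>b\<in>set Bs. \<not> b < x" using around(3) by (blast dest: less_asym)
  moreover have "\<forall>t\<in>set (take j ts). length (leaf_keys t) = Suc (length (separators t))"
    using wf_children length_leaf_keys by (auto dest: in_set_takeD)
  then have "length Ps = length (concat (map leaf_keys (take j ts)))"
    using \<open>j \<le> length ks\<close> lengths
    by (simp add: Ps_def length_interleave_pairs length_concat sum_list_Suc o_def cong: map_cong)
  ultimately show ?thesis
    by (simp add: rank_def filter_empty_conv)
qed

lemma rank_less_length_leaf_keys: "wf_btree t \<Longrightarrow> rank x (separators t) < length (leaf_keys t)"
  using length_filter_le[of _ "separators t"] by (simp add: rank_def length_leaf_keys less_Suc_eq_le)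

lemma leaf_keys_around_child:
  "ts \<noteq> [] \<Longrightarrow> j < length ts \<Longrightarrow> leaf_keys (BNode ks ts) =
    concat (map leaf_keys (take j ts)) @ leaf_keys (ts ! j) @ concat (map leaf_keys (drop (Suc j) ts))"
  by (metis id_take_nth_drop concat.simps(2) concat_append list.simps(9) leaf_keys.simps map_append)

lemma grow_leaf_around_child:
  assumes "wf_btree (BNode ks ts)" "ts \<noteq> []"
    "sorted_wrt (<) (inorder (BNode ks ts))" "x \<notin> set (inorder (BNode ks ts))"
  defines "j \<equiv> rank x ks"
  shows "grow_leaf m (map length (leaf_keys (BNode ks ts))) (rank x (separators (BNode ks ts))) =
    map length (concat (map leaf_keys (take j ts))) @
    grow_leaf m (map length (leaf_keys (ts ! j))) (rank x (separators (ts ! j))) @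
    map length (concat (map leaf_keys (drop (Suc j) ts)))"
proof -
  from assms(1,2) have "j < length ts" "wf_btree (ts ! j)"
    by (auto simp: j_def rank_def le_imp_less_Suc)
  let ?L1 = "concat (map leaf_keys (take j ts))" and ?L2 = "concat (map leaf_keys (drop (Suc j) ts))"
  have "grow_leaf m (map length (leaf_keys (BNode ks ts))) (rank x (separators (BNode ks ts))) =
      grow_leaf m (map length ?L1 @ map length (leaf_keys (ts ! j)) @ map length ?L2)
        (length (map length ?L1) + rank x (separators (ts ! j)))"
    by (simp only: leaf_keys_around_child[OF assms(2) \<open>j < length ts\<close>] map_append length_map
        rank_separators_child[OF assms(1-4), folded j_def])
  also have "\<dots> = map length ?L1 @ grow_leaf m (map length (leaf_keys (ts ! j))) (rank x (separators (ts ! j)))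
      @ map length ?L2"
    by (rule grow_leaf_append) (simp add: rank_less_length_leaf_keys \<open>wf_btree (ts ! j)\<close>)
  finally show ?thesis .
qed

definition valid_insertion :: "nat \<Rightarrow> 'a::linorder \<Rightarrow> 'a btree \<Rightarrow> 'a ins_res \<Rightarrow> bool" where
  "valid_insertion m x t r \<longleftrightarrow>
     (\<forall>t'\<in>set (res_nodes r). wf_btree t') \<and> inorder_res r = insort x (inorder t) \<and>
     map length (concat (map leaf_keys (res_nodes r))) =
       grow_leaf m (map length (leaf_keys t)) (rank x (separators t))"

lemma valid_insertion_leaf: "valid_insertion m x (BNode ks []) (split_node m (insort x ks) [])"
proof (cases "length ks < 2 * m")
  case False
  then have "take m (insort x ks) @ insort x ks ! m # drop (Suc m) (insort x ks) = insort x ks"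
    by (simp add: id_take_nth_drop[symmetric])
  with False show ?thesis
    by (simp add: valid_insertion_def grow_leaf_def rank_def split_node_def)
qed (auto simp: valid_insertion_def grow_leaf_def rank_def split_node_def)

lemma valid_insertion_Keep:
  assumes "wf_btree (BNode ks ts)" "ts \<noteq> []"
    "sorted_wrt (<) (inorder (BNode ks ts))" "x \<notin> set (inorder (BNode ks ts))"
  defines "j \<equiv> rank x ks"
  assumes "valid_insertion m x (ts ! j) (Keep t)"
  shows "valid_insertion m x (BNode ks ts) (Keep (BNode ks (ts[j := t])))"
proof -
  from assms(1,2) have lengths: "length ts = length ks + 1" and wf: "\<forall>t\<in>set ts. wf_btree t" by auto
  have "j \<le> length ks" by (simp add: j_def rank_def)
  with lengths have "j < length ts" by simp
  note around = inorder_around_child[OF assms(1-4), folded j_def]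
  have "wf_btree (BNode ks (ts[j := t]))"
    using lengths wf assms(6) by (auto simp: valid_insertion_def dest: set_update_subset_insert[THEN subsetD])
  moreover have "inorder (BNode ks (ts[j := t])) =
      interleave_pairs (map inorder (take j ts)) (take j ks) @ inorder t @
      interleave ([] # map inorder (drop (Suc j) ts)) (drop j ks)"
    using interleave_at_nth[of "ts[j := t]" ks j inorder] lengths \<open>j \<le> length ks\<close> assms(2)
    by (simp add: take_update_cancel drop_update_cancel)
  moreover have "leaf_keys (BNode ks (ts[j := t])) =
      concat (map leaf_keys (take j ts)) @ leaf_keys t @ concat (map leaf_keys (drop (Suc j) ts))"
    using \<open>j < length ts\<close> assms(2) by (simp add: upd_conv_take_nth_drop)
  ultimately show ?thesis
    using assms(6) around grow_leaf_around_child[OF assms(1-4), of m, folded j_def]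
    by (simp add: valid_insertion_def insort_between)
qed

lemma valid_insertion_Split:
  assumes "wf_btree (BNode ks ts)" "ts \<noteq> []"
    "sorted_wrt (<) (inorder (BNode ks ts))" "x \<notin> set (inorder (BNode ks ts))"
  defines "j \<equiv> rank x ks"
  assumes "valid_insertion m x (ts ! j) (Split l a r)"
  shows "valid_insertion m x (BNode ks ts)
    (split_node m (take j ks @ a # drop j ks) (take j ts @ l # r # drop (j + 1) ts))"
proof -
  from assms(1,2) have lengths: "length ts = length ks + 1" and wf: "\<forall>t\<in>set ts. wf_btree t" by auto
  have "j \<le> length ks" by (simp add: j_def rank_def)
  with lengths have "j < length ts" by simp
  note around = inorder_around_child[OF assms(1-4), folded j_def]
  define ks' where "ks' = take j ks @ a # drop j ks"
  define ts' where "ts' = take j ts @ l # r # drop (j + 1) ts"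
  have "ts' \<noteq> []" by (simp add: ts'_def)
  have wf': "wf_btree (BNode ks' ts')"
    using lengths wf assms(6) \<open>j \<le> length ks\<close>
    by (auto simp: valid_insertion_def ks'_def ts'_def dest: in_set_takeD in_set_dropD)
  have "interleave (map inorder ts') ks' = interleave_pairs (map inorder (take j ts)) (take j ks) @
      interleave (inorder l # inorder r # map inorder (drop (Suc j) ts)) (a # drop j ks)"
    using \<open>j \<le> length ks\<close> \<open>j < length ts\<close> by (simp add: ts'_def ks'_def interleave_append)
  then have "inorder (BNode ks' ts') = interleave_pairs (map inorder (take j ts)) (take j ks) @
      (inorder l @ a # inorder r) @ interleave ([] # map inorder (drop (Suc j) ts)) (drop j ks)"
    using \<open>ts' \<noteq> []\<close> by (simp add: interleave_Cons[of "inorder r"])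
  moreover have "leaf_keys (BNode ks' ts') = concat (map leaf_keys (take j ts)) @
      (leaf_keys l @ leaf_keys r) @ concat (map leaf_keys (drop (Suc j) ts))"
    using \<open>ts' \<noteq> []\<close> by (simp add: ts'_def)
  ultimately show ?thesis
    using split_node_internal[OF \<open>ts' \<noteq> []\<close> wf', of m] assms(6) around
      grow_leaf_around_child[OF assms(1-4), of m, folded j_def]
    by (simp add: valid_insertion_def insort_between ks'_def ts'_def)
qed

lemma valid_insertion_ins:
  assumes "wf_btree t" "sorted_wrt (<) (inorder t)" "x \<notin> set (inorder t)"
  shows "valid_insertion m x t (ins m x t)"
  using assms
proof (induction m x t rule: ins.induct)
  case (1 m x ks ts)
  show ?case
  proof (cases "ts = []")
    case False
    define j where "j = rank x ks"
    with "1.prems"(1) False have "j < length ts" by (auto simp: rank_def le_imp_less_Suc)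
    have "wf_btree (ts ! j)" "sorted_wrt (<) (inorder (ts ! j))" "x \<notin> set (inorder (ts ! j))"
      using "1.prems" inorder_around_child(1)[OF "1.prems"(1) False "1.prems"(2,3)] \<open>j < length ts\<close>
      by (auto simp: j_def sorted_wrt_append)
    with "1.IH"[OF False refl, folded rank_def, folded j_def, OF \<open>j < length ts\<close>]
    have IH: "valid_insertion m x (ts ! j) (ins m x (ts ! j))" by blast
    show ?thesis
    proof (cases "ins m x (ts ! j)")
      case (Keep t)
      with IH valid_insertion_Keep[OF "1.prems"(1) False "1.prems"(2,3)] False \<open>j < length ts\<close> show ?thesis
        by (simp add: j_def rank_def Let_def)
    next
      case (Split l a r)
      with IH valid_insertion_Split[OF "1.prems"(1) False "1.prems"(2,3)] False \<open>j < length ts\<close> show ?thesis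
        by (simp add: j_def rank_def Let_def)
    qed
  qed (simp add: valid_insertion_leaf)
qed

lemma insert_key_correct:
  fixes x :: "'a::linorder"
  assumes "wf_btree t" "sorted_wrt (<) (inorder t)" "x \<notin> set (inorder t)"
  shows "wf_btree (insert_key m x t)" and "inorder (insert_key m x t) = insort x (inorder t)"
    and "map length (leaf_keys (insert_key m x t)) =
      grow_leaf m (map length (leaf_keys t)) (rank x (separators t))"
  using valid_insertion_ins[OF assms, of m]
  by (cases "ins m x t"; simp add: insert_key_def valid_insertion_def)+

definition admissible_leaf_sizes :: "nat \<Rightarrow> nat list \<Rightarrow> bool" where
  "admissible_leaf_sizes m ns \<longleftrightarrow>
     ns \<noteq> [] \<and> ((length ns = 1 \<and> hd ns \<le> 2 * m) \<or> (\<forall>n\<in>set ns. m \<le> n \<and> n \<le> 2 * m))"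

lemma admissible_grow_leaf:
  assumes "admissible_leaf_sizes m ns" "i < length ns"
  shows "admissible_leaf_sizes m (grow_leaf m ns i)"
proof (cases "length ns = 1 \<and> hd ns \<le> 2 * m")
  case True
  then obtain k where "ns = [k]" "k \<le> 2 * m" by (cases ns) auto
  with assms show ?thesis by (auto simp: grow_leaf_def admissible_leaf_sizes_def)
next
  case False
  with assms have "\<forall>n\<in>set ns. m \<le> n \<and> n \<le> 2 * m" "ns ! i \<in> set ns"
    by (auto simp: admissible_leaf_sizes_def)
  then show ?thesis
    by (auto simp: grow_leaf_def admissible_leaf_sizes_def dest: in_set_takeD in_set_dropD)
qed

lemma build_snoc: "build m (xs @ [x]) = insert_key m x (build m xs)"
  by (simp add: build_def)

lemma build_invariants:
  fixes xs :: "'a::linorder list"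
  assumes "distinct xs"
  shows "wf_btree (build m xs) \<and> sorted_wrt (<) (inorder (build m xs)) \<and>
    set (inorder (build m xs)) = set xs \<and> admissible_leaf_sizes m (map length (leaf_keys (build m xs)))"
  using assms
proof (induction xs rule: rev_induct)
  case Nil
  then show ?case by (simp add: build_def admissible_leaf_sizes_def)
next
  case (snoc x xs)
  let ?t = "build m xs"
  from snoc have IH: "wf_btree ?t" "sorted_wrt (<) (inorder ?t)" "set (inorder ?t) = set xs"
    "admissible_leaf_sizes m (map length (leaf_keys ?t))"
    by auto
  with snoc.prems have "x \<notin> set (inorder ?t)" by simp
  note insert = insert_key_correct[OF IH(1,2) this, of m]
  have "sorted_wrt (<) (insort x (inorder ?t))"
    using IH(2) \<open>x \<notin> set (inorder ?t)\<close> by (simp add: strict_sorted_iff sorted_insort distinct_insort)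
  with insert IH admissible_grow_leaf[OF IH(4)] rank_less_length_leaf_keys[OF IH(1)]
  show ?case by (simp add: build_snoc set_insort_key)
qed


section \<open>Order-preserving relabelling\<close>

lemma split_node_map: "split_node m (map h ks) (map (map_btree h) ts) = map_ins_res h (split_node m ks ts)"
  by (auto simp: split_node_def take_map drop_map)

lemma ins_map:
  fixes h :: "'a::linorder \<Rightarrow> 'b::linorder"
  assumes "strict_mono h"
  shows "ins m (h x) (map_btree h t) = map_ins_res h (ins m x t)"
proof (induction m x t rule: ins.induct)
  case (1 m x ks ts)
  have insort_map: "insort (h x) (map h ks) = map h (insort x ks)"
    using assms by (induction ks) (auto simp: strict_mono_less_eq)
  have less_map: "(\<lambda>k. k < h x) \<circ> h = (\<lambda>k. k < x)"
    using assms by (auto simp: strict_mono_less)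
  show ?case
  proof (cases "ts = []")
    case True
    then show ?thesis using split_node_map[of m h "insort x ks" "[]"] by (simp add: insort_map)
  next
    case False
    define j where "j = length (filter (\<lambda>k. k < x) ks)"
    show ?thesis
    proof (cases "j < length ts")
      case True
      note IH = "1.IH"[OF False refl, folded j_def, OF True]
      show ?thesis
      proof (cases "ins m x (ts ! j)")
        case (Split l a r)
        have "split_node m (take j (map h ks) @ h a # drop j (map h ks))
              (take j (map (map_btree h) ts) @ map_btree h l # map_btree h r # drop (j + 1) (map (map_btree h) ts))
            = map_ins_res h (split_node m (take j ks @ a # drop j ks) (take j ts @ l # r # drop (j + 1) ts))"
          using split_node_map[of m h "take j ks @ a # drop j ks" "take j ts @ l # r # drop (j + 1) ts"]
          by (simp add: take_map drop_map)
        with False True IH Split show ?thesis by (simp add: less_map j_def[symmetric] Let_def)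
      qed (use False True IH in \<open>simp add: less_map j_def[symmetric] Let_def map_update\<close>)
    qed (use False in \<open>simp add: less_map j_def[symmetric] Let_def\<close>)
  qed
qed

lemma build_map:
  fixes h :: "'a::linorder \<Rightarrow> 'b::linorder"
  assumes "strict_mono h"
  shows "build m (map h xs) = map_btree h (build m xs)"
proof -
  have "insert_key m (h x) (map_btree h t) = map_btree h (insert_key m x t)" for x t
    by (simp add: insert_key_def ins_map[OF assms] split: ins_res.splits)
  then show ?thesis
    by (induction xs rule: rev_induct) (simp_all add: build_snoc, simp add: build_def)
qed

lemma leaf_keys_map: "leaf_keys (map_btree h t) = map (map h) (leaf_keys t)"
  by (induction t) (simp add: map_concat cong: map_cong)

lemma separators_map: "separators (map_btree h t) = map h (separators t)"
  by (induction t) (simp add: map_interleave cong: map_cong)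

section \<open>Inserting the last key of a random permutation\<close>

definition skip :: "nat \<Rightarrow> nat \<Rightarrow> nat" where
  "skip r v = (if v < r then v else Suc v)"

lemma strict_mono_skip: "strict_mono (skip r)"
  by (auto simp: strict_mono_def skip_def)

lemma skip_image: "1 \<le> r \<Longrightarrow> r \<le> Suc N \<Longrightarrow> skip r ` {1..N} = {1..Suc N} - {r}"
proof (intro equalityI subsetI)
  fix v assume "1 \<le> r" "r \<le> Suc N" "v \<in> {1..Suc N} - {r}"
  then show "v \<in> skip r ` {1..N}"
  proof (cases "v < r")
    case False
    with \<open>1 \<le> r\<close> \<open>v \<in> {1..Suc N} - {r}\<close> show ?thesis
      by (intro image_eqI[of _ _ "v - 1"]) (auto simp: skip_def)
  qed (auto simp: skip_def intro: image_eqI[of _ _ v])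
qed (auto simp: skip_def)

lemma permutations_of_set_snoc:
  assumes "A \<noteq> {}"
  shows "permutations_of_set A = (\<Union>r\<in>A. (\<lambda>xs. xs @ [r]) ` permutations_of_set (A - {r}))"
proof -
  have "permutations_of_set A = rev ` permutations_of_set A" by simp
  also have "\<dots> = (\<Union>r\<in>A. (\<lambda>xs. rev xs @ [r]) ` permutations_of_set (A - {r}))"
    using assms by (subst permutations_of_set_nonempty) (simp_all add: image_UN image_image)
  also have "\<dots> = (\<Union>r\<in>A. (\<lambda>xs. xs @ [r]) ` rev ` permutations_of_set (A - {r}))"
    by (simp only: image_image)
  finally show ?thesis by (simp only: rev_permutations_of_set)
qed

lemma sum_permutations_of_set_Suc:
  "(\<Sum>ys\<in>permutations_of_set {1..Suc N}. f ys) =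
   (\<Sum>r\<in>{1..Suc N}. \<Sum>xs\<in>permutations_of_set {1..N}. f (map (skip r) xs @ [r]))"
proof -
  have "(\<Sum>ys\<in>permutations_of_set {1..Suc N}. f ys) =
      (\<Sum>r\<in>{1..Suc N}. \<Sum>ys\<in>(\<lambda>xs. xs @ [r]) ` permutations_of_set ({1..Suc N} - {r}). f ys)"
    by (subst permutations_of_set_snoc, simp, rule sum.UNION_disjoint) auto
  also have "\<dots> = (\<Sum>r\<in>{1..Suc N}. \<Sum>xs\<in>permutations_of_set {1..N}. f (map (skip r) xs @ [r]))"
  proof (rule sum.cong[OF refl])
    fix r assume "r \<in> {1..Suc N}"
    then have "permutations_of_set ({1..Suc N} - {r}) = map (skip r) ` permutations_of_set {1..N}"
      using skip_image[of r N] strict_mono_skip[of r]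
      by (metis atLeastAtMost_iff permutations_of_set_image_inj strict_mono_imp_inj_on)
    moreover have "inj_on (\<lambda>xs. map (skip r) xs @ [r]) (permutations_of_set {1..N})"
      using strict_mono_imp_inj_on[OF strict_mono_skip[of r]] by (auto intro!: inj_onI)
    ultimately show "(\<Sum>ys\<in>(\<lambda>xs. xs @ [r]) ` permutations_of_set ({1..Suc N} - {r}). f ys) =
        (\<Sum>xs\<in>permutations_of_set {1..N}. f (map (skip r) xs @ [r]))"
      by (simp add: image_image sum.reindex o_def)
  qed
  finally show ?thesis .
qed

lemma sum_permutes_eq_sum_permutations_of_set:
  "(\<Sum>\<pi>\<in>{\<pi>. \<pi> permutes {1..N}}. g (map \<pi> [1..<N+1])) = (\<Sum>xs\<in>permutations_of_set {1..N}. g xs)"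
proof -
  let ?h = "\<lambda>\<pi>. map \<pi> [1..<N+1]"
  let ?P = "{\<pi>. \<pi> permutes {1..N}}"
  have inj: "inj_on ?h ?P"
  proof (rule inj_onI)
    fix \<pi> \<sigma> assume "\<pi> \<in> ?P" "\<sigma> \<in> ?P" "?h \<pi> = ?h \<sigma>"
    then have "\<forall>i\<in>{1..N}. \<pi> i = \<sigma> i" by (auto simp: map_eq_conv)
    with \<open>\<pi> \<in> ?P\<close> \<open>\<sigma> \<in> ?P\<close> show "\<pi> = \<sigma>" by (metis mem_Collect_eq permutes_not_in ext)
  qed
  have "?h ` ?P \<subseteq> permutations_of_set {1..N}"
  proof
    fix ys assume "ys \<in> ?h ` ?P"
    then obtain \<pi> where \<pi>: "\<pi> permutes {1..N}" "ys = ?h \<pi>" by auto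
    have "set [1..<N+1] = {1..N}" by auto
    with \<pi> show "ys \<in> permutations_of_set {1..N}"
      by (auto simp: distinct_map permutes_image permutes_inj_on simp del: upt_Suc)
  qed
  moreover have "card (?h ` ?P) = card (permutations_of_set {1..N})"
    using card_image[OF inj] card_permutations[of "{1..N}" N] by simp
  ultimately have "?h ` ?P = permutations_of_set {1..N}"
    by (intro card_subset_eq) auto
  then show ?thesis
    using sum.reindex[OF inj, of g] by (simp add: o_def)
qed

lemma append_Cons_eq_upt:
  assumes "L @ s # R = [a..<b]"
  shows "s = a + length L" and "R = [Suc s..<b]" and "s < b"
proof -
  have "drop (length L) [a..<b] = s # R" using assms[symmetric] by simp
  then show "s = a + length L" "R = [Suc s..<b]" "s < b" by (auto simp: upt_eq_Cons_conv)
qed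

lemma sum_rank_interleave_upt:
  fixes G :: "nat \<Rightarrow> 'b::comm_semiring_1"
  assumes "length Ls = length ss + 1" "interleave Ls ss = [a..<b]" "a \<le> b"
  shows "(\<Sum>r\<in>{a..b}. G (rank r ss)) = (\<Sum>i<length Ls. of_nat (length (Ls ! i) + 1) * G i)"
  using assms
proof (induction ss arbitrary: Ls a G)
  case Nil
  then obtain L where "Ls = [L]" "L = [a..<b]" by (cases Ls) auto
  with Nil show ?case by (simp add: rank_def Suc_diff_le)
next
  case (Cons s ss)
  then obtain L Ls' where Ls: "Ls = L # Ls'" and lengths: "length Ls' = length ss + 1"
    by (cases Ls) auto
  with Cons.prems have split: "L @ s # interleave Ls' ss = [a..<b]" by simp
  note s = append_Cons_eq_upt[OF split]
  have "set ss \<subseteq> set (interleave Ls' ss)" using set_interleave[OF lengths] by blast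
  with s have "\<forall>v\<in>set ss. s < v" by auto
  then have "rank r (s # ss) = 0" if "r \<le> s" for r
    using that by (auto simp: rank_def filter_empty_conv)
  then have "(\<Sum>r\<in>{a..s}. G (rank r (s # ss))) = of_nat (length L + 1) * G 0"
    using s by simp
  moreover have "(\<Sum>r\<in>{Suc s..b}. G (rank r (s # ss))) =
      (\<Sum>i<length Ls'. of_nat (length (Ls' ! i) + 1) * G (Suc i))"
    using Cons.IH[OF lengths, of "Suc s" "\<lambda>i. G (Suc i)"] s Cons.prems by (simp add: rank_def)
  moreover have "{a..b} = {a..s} \<union> {Suc s..b}" "{a..s} \<inter> {Suc s..b} = {}"
    using s split by auto
  ultimately show ?case
    unfolding Ls by (simp add: sum.union_disjoint sum.lessThan_Suc_shift del: sum.lessThan_Suc)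
qed

lemma rank_map_skip: "rank r (map (skip r) ss) = rank r ss"
proof -
  have "(\<lambda>s. s < r) \<circ> skip r = (\<lambda>s. s < r)" by (rule ext) (simp add: skip_def)
  then show ?thesis by (simp add: rank_def filter_map)
qed

lemma build_insert_last:
  assumes "distinct xs"
  shows "map length (leaf_keys (build m (map (skip r) xs @ [r]))) =
    grow_leaf m (map length (leaf_keys (build m xs))) (rank r (separators (build m xs)))"
proof -
  have "distinct (map (skip r) xs)"
    using assms strict_mono_imp_inj_on[OF strict_mono_skip] by (simp add: distinct_map inj_on_subset)
  note invariants = build_invariants[OF this, of m]
  have relabel: "build m (map (skip r) xs) = map_btree (skip r) (build m xs)"
    by (rule build_map[OF strict_mono_skip])
  have "r \<notin> set (inorder (build m (map (skip r) xs)))"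
    using invariants by (auto simp: skip_def)
  with invariants show ?thesis
    by (simp add: build_snoc insert_key_correct relabel leaf_keys_map separators_map rank_map_skip o_def)
qed

lemma inorder_build_permutation:
  assumes "xs \<in> permutations_of_set {1..N}"
  shows "inorder (build m xs) = [1..<Suc N]"
proof -
  from assms have "distinct xs" "set xs = {1..N}" by (auto dest: permutations_of_setD)
  with build_invariants[OF \<open>distinct xs\<close>, of m] show ?thesis
    by (intro sorted_distinct_set_unique) (auto simp: strict_sorted_iff simp del: upt_Suc)
qed

lemma sum_leaf_sizes_build_permutation:
  assumes "xs \<in> permutations_of_set {1..N}"
  shows "sum_list (map length (leaf_keys (build m xs))) + length (leaf_keys (build m xs)) = Suc N"
proof -
  have "wf_btree (build m xs)"
    using assms build_invariants by (auto dest: permutations_of_setD)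
  moreover have "length (inorder (build m xs)) = N"
    by (simp add: inorder_build_permutation[OF assms] del: upt_Suc)
  ultimately show ?thesis
    by (simp add: inorder_eq_interleave length_interleave length_leaf_keys length_concat)
qed

lemma leaf_sizes_build_permutation:
  assumes "xs \<in> permutations_of_set {1..N}" "2 * m < N"
  shows "set (map length (leaf_keys (build m xs))) \<subseteq> {m..2 * m}"
proof -
  let ?ns = "map length (leaf_keys (build m xs))"
  have "admissible_leaf_sizes m ?ns"
    using assms build_invariants by (auto dest: permutations_of_setD)
  moreover have "\<not> (length ?ns = 1 \<and> hd ?ns \<le> 2 * m)"
  proof
    assume single: "length ?ns = 1 \<and> hd ?ns \<le> 2 * m"
    then obtain k where "?ns = [k]" by (cases ?ns) auto
    with single sum_leaf_sizes_build_permutation[OF assms(1), of m] assms(2) show False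
      by (simp add: length_map[of length, symmetric] del: length_map)
  qed
  ultimately show ?thesis by (auto simp: admissible_leaf_sizes_def)
qed

lemma sum_insert_last:
  fixes F :: "nat list \<Rightarrow> 'b::comm_semiring_1" and m :: nat
  assumes "xs \<in> permutations_of_set {1..N}"
  defines "ns \<equiv> map length (leaf_keys (build m xs))"
  shows "(\<Sum>r\<in>{1..Suc N}. F (map length (leaf_keys (build m (map (skip r) xs @ [r]))))) =
    (\<Sum>i<length ns. of_nat (ns ! i + 1) * F (grow_leaf m ns i))"
proof -
  let ?t = "build m xs"
  have "wf_btree ?t" using assms build_invariants by (auto dest: permutations_of_setD)
  have "(\<Sum>r\<in>{1..Suc N}. F (map length (leaf_keys (build m (map (skip r) xs @ [r]))))) =
      (\<Sum>r\<in>{1..Suc N}. F (grow_leaf m ns (rank r (separators ?t))))"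
    using assms by (simp add: ns_def build_insert_last permutations_of_setD)
  also have "\<dots> = (\<Sum>i<length (leaf_keys ?t). of_nat (length (leaf_keys ?t ! i) + 1) * F (grow_leaf m ns i))"
    using inorder_build_permutation[OF assms(1), of m] \<open>wf_btree ?t\<close>
    by (intro sum_rank_interleave_upt) (simp_all add: length_leaf_keys inorder_eq_interleave)
  finally show ?thesis by (simp add: ns_def)
qed

section \<open>Expected numbers of leaves of each size\<close>

definition expected_leaf_count :: "nat \<Rightarrow> nat \<Rightarrow> nat \<Rightarrow> real" where
  "expected_leaf_count m k N =
     (\<Sum>xs\<in>permutations_of_set {1..N}. real (count_list (map length (leaf_keys (build m xs))) k)) / fact N"

text \<open>A leaf with \<open>v\<close> keys receives the new key with weight \<open>v + 1\<close>; it then turns into a leaf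
  with \<open>v + 1\<close> keys or, if \<open>v = 2m\<close>, splits into two leaves with \<open>m\<close> keys.\<close>
definition leaf_flux :: "nat \<Rightarrow> nat \<Rightarrow> nat \<Rightarrow> real" where
  "leaf_flux m k v = real (v + 1) *
     (real (count_list (if v < 2 * m then [Suc v] else [m, v - m]) k) - (if v = k then 1 else 0))"

lemma count_grow_leaf:
  assumes "i < length ns"
  shows "real (count_list (grow_leaf m ns i) k) = real (count_list ns k) +
    (real (count_list (if ns ! i < 2 * m then [Suc (ns ! i)] else [m, ns ! i - m]) k) -
     (if ns ! i = k then 1 else 0))"
proof -
  have "count_list ns k = count_list (take i ns @ ns ! i # drop (Suc i) ns) k"
    using assms by (simp add: id_take_nth_drop[symmetric])
  then show ?thesis by (simp add: grow_leaf_def)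
qed

lemma sum_list_map_eq_sum_of_nat_count:
  fixes f :: "'a \<Rightarrow> 'b::semiring_1"
  assumes "set xs \<subseteq> X" "finite X"
  shows "sum_list (map f xs) = (\<Sum>x\<in>X. of_nat (count_list xs x) * f x)"
  using assms(1)
proof (induction xs)
  case (Cons a xs)
  have "of_nat (count_list (a # xs) x) * f x = (if a = x then f x else 0) + of_nat (count_list xs x) * f x"
    for x by (simp add: distrib_right)
  then have "(\<Sum>x\<in>X. of_nat (count_list (a # xs) x) * f x) =
      (\<Sum>x\<in>X. if a = x then f x else 0) + (\<Sum>x\<in>X. of_nat (count_list xs x) * f x)"
    by (simp only: sum.distrib)
  with Cons assms(2) show ?case by simp
qed simp

lemma sum_list_leaf_sizes_build_permutation:
  fixes f :: "nat \<Rightarrow> 'b::semiring_1"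
  assumes "xs \<in> permutations_of_set {1..N}" "2 * m < N"
  shows "sum_list (map f (map length (leaf_keys (build m xs)))) =
    (\<Sum>k=m..2*m. of_nat (count_list (map length (leaf_keys (build m xs))) k) * f k)"
  by (rule sum_list_map_eq_sum_of_nat_count[OF leaf_sizes_build_permutation[OF assms]]) simp

lemma sum_list_gaps_build_permutation:
  assumes "xs \<in> permutations_of_set {1..N}"
  shows "sum_list (map (\<lambda>v. real (v + 1)) (map length (leaf_keys (build m xs)))) = real N + 1"
proof -
  have "sum_list (map (\<lambda>v. real (v + 1)) vs) = real (sum_list vs + length vs)" for vs :: "nat list"
    by (induction vs) auto
  with sum_leaf_sizes_build_permutation[OF assms, of m] show ?thesis
    by (metis length_map of_nat_Suc add.commute)
qed

lemma sum_count_insert_last: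
  assumes "xs \<in> permutations_of_set {1..N}" "2 * m < N"
  defines "ns \<equiv> map length (leaf_keys (build m xs))"
  shows "(\<Sum>r\<in>{1..Suc N}. real (count_list (map length (leaf_keys (build m (map (skip r) xs @ [r])))) k))
    = real (Suc N) * real (count_list ns k) + (\<Sum>v=m..2*m. leaf_flux m k v * real (count_list ns v))"
proof -
  have "(\<Sum>r\<in>{1..Suc N}. real (count_list (map length (leaf_keys (build m (map (skip r) xs @ [r])))) k))
      = (\<Sum>i<length ns. real (ns ! i + 1) * real (count_list (grow_leaf m ns i) k))"
    using sum_insert_last[OF assms(1), of "\<lambda>ns. real (count_list ns k)" m] by (simp add: ns_def)
  also have "\<dots> = (\<Sum>i<length ns. real (ns ! i + 1) * real (count_list ns k) + leaf_flux m k (ns ! i))"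
    by (rule sum.cong) (simp_all only: lessThan_iff count_grow_leaf leaf_flux_def distrib_left)
  also have "\<dots> = (\<Sum>i<length ns. real (ns ! i + 1)) * real (count_list ns k) +
      (\<Sum>i<length ns. leaf_flux m k (ns ! i))"
    by (simp only: sum.distrib sum_distrib_right)
  also have "\<dots> = sum_list (map (\<lambda>v. real (v + 1)) ns) * real (count_list ns k) +
      sum_list (map (leaf_flux m k) ns)"
    by (simp add: sum_list_sum_nth atLeast0LessThan)
  also have "sum_list (map (\<lambda>v. real (v + 1)) ns) = real (Suc N)"
    using sum_list_gaps_build_permutation[OF assms(1), of m] by (simp add: ns_def)
  finally show ?thesis
    using sum_list_leaf_sizes_build_permutation[OF assms(1,2), of "leaf_flux m k"]
    by (simp add: ns_def mult.commute)
qed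

lemma expected_leaf_count_Suc:
  assumes "2 * m < N"
  shows "expected_leaf_count m k (Suc N) = expected_leaf_count m k N +
    (\<Sum>v=m..2*m. leaf_flux m k v * expected_leaf_count m v N) / real (Suc N)"
proof -
  let ?c = "\<lambda>k xs. real (count_list (map length (leaf_keys (build m xs))) k)"
  let ?S = "\<lambda>k. \<Sum>xs\<in>permutations_of_set {1..N}. ?c k xs"
  have S_eq: "?S v = expected_leaf_count m v N * fact N" for v
    by (simp add: expected_leaf_count_def)
  have "(\<Sum>ys\<in>permutations_of_set {1..Suc N}. ?c k ys) =
      (\<Sum>xs\<in>permutations_of_set {1..N}. \<Sum>r\<in>{1..Suc N}. ?c k (map (skip r) xs @ [r]))"
    by (subst sum_permutations_of_set_Suc) (rule sum.swap)
  also have "\<dots> = (\<Sum>xs\<in>permutations_of_set {1..N}.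
      real (Suc N) * ?c k xs + (\<Sum>v=m..2*m. leaf_flux m k v * ?c v xs))"
    by (rule sum.cong[OF refl], rule sum_count_insert_last[OF _ assms])
  also have "\<dots> = real (Suc N) * ?S k + (\<Sum>v=m..2*m. leaf_flux m k v * ?S v)"
    by (simp add: sum.distrib sum_distrib_left sum.swap[of _ "{m..2*m}"])
  also have "\<dots> = (real (Suc N) * expected_leaf_count m k N +
      (\<Sum>v=m..2*m. leaf_flux m k v * expected_leaf_count m v N)) * fact N"
    by (simp only: S_eq) (simp add: algebra_simps sum_distrib_left)
  finally have total: "(\<Sum>ys\<in>permutations_of_set {1..Suc N}. ?c k ys) = \<dots>" .
  have cancel: "(a * E + Y) * F / (a * F) = E + Y / a" if "a \<noteq> 0" "F \<noteq> 0" for a E Y F :: real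
    using that by (simp add: field_simps)
  show ?thesis
    unfolding expected_leaf_count_def[of m k "Suc N"] total fact_Suc by (rule cancel) simp_all
qed

lemma sum_expected_leaf_count:
  fixes f :: "nat \<Rightarrow> real"
  assumes "2 * m < N"
  shows "(\<Sum>xs\<in>permutations_of_set {1..N}. sum_list (map f (map length (leaf_keys (build m xs))))) / fact N =
    (\<Sum>k=m..2*m. expected_leaf_count m k N * f k)"
proof -
  let ?c = "\<lambda>k xs. real (count_list (map length (leaf_keys (build m xs))) k)"
  have S_eq: "(\<Sum>xs\<in>permutations_of_set {1..N}. ?c v xs) = expected_leaf_count m v N * fact N" for v
    by (simp add: expected_leaf_count_def)
  have "(\<Sum>xs\<in>permutations_of_set {1..N}. sum_list (map f (map length (leaf_keys (build m xs))))) =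
      (\<Sum>xs\<in>permutations_of_set {1..N}. \<Sum>k=m..2*m. ?c k xs * f k)"
    by (rule sum.cong[OF refl], rule sum_list_leaf_sizes_build_permutation[OF _ assms])
  also have "\<dots> = (\<Sum>k=m..2*m. (\<Sum>xs\<in>permutations_of_set {1..N}. ?c k xs) * f k)"
    by (subst sum.swap) (simp add: sum_distrib_right)
  also have "\<dots> = (\<Sum>k=m..2*m. expected_leaf_count m k N * f k) * fact N"
    by (simp only: S_eq) (simp add: algebra_simps sum_distrib_left)
  finally show ?thesis by simp
qed

lemma expected_leaves_eq_sum_expected_leaf_count:
  assumes "2 * m < N"
  shows "expected_leaves m N = (\<Sum>k=m..2*m. expected_leaf_count m k N)"
proof -
  have length_eq: "real (length L) = sum_list (map (\<lambda>_. 1) (map length L))" for L :: "'a list list"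
    by (induction L) simp_all
  have "expected_leaves m N = (\<Sum>xs\<in>permutations_of_set {1..N}. real (length (leaf_keys (build m xs)))) / fact N"
    unfolding expected_leaves_def leaves_eq_length_leaf_keys
    by (subst sum_permutes_eq_sum_permutations_of_set) (rule refl)
  also have "\<dots> =
      (\<Sum>xs\<in>permutations_of_set {1..N}. sum_list (map (\<lambda>_. 1) (map length (leaf_keys (build m xs))))) / fact N"
    by (simp only: length_eq)
  finally have "expected_leaves m N = \<dots>" .
  with sum_expected_leaf_count[OF assms, of "\<lambda>_. 1"] show ?thesis by simp
qed

lemma weighted_sum_expected_leaf_count:
  assumes "2 * m < N"
  shows "(\<Sum>k=m..2*m. expected_leaf_count m k N * real (k + 1)) = real N + 1"
proof -
  have "(\<Sum>xs\<in>permutations_of_set {1..N}.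
      sum_list (map (\<lambda>k. real (k + 1)) (map length (leaf_keys (build m xs))))) =
      (\<Sum>xs\<in>permutations_of_set {1..N}. real N + 1)"
    by (rule sum.cong[OF refl sum_list_gaps_build_permutation])
  then have "(\<Sum>xs\<in>permutations_of_set {1..N}.
      sum_list (map (\<lambda>k. real (k + 1)) (map length (leaf_keys (build m xs))))) / fact N = real N + 1"
    by simp
  with sum_expected_leaf_count[OF assms, of "\<lambda>k. real (k + 1)"] show ?thesis by simp
qed

section \<open>A linear recurrence with polynomial decay\<close>

lemma bernoulli_thirteen:
  fixes n :: real
  assumes "n \<ge> 8"
  shows "1 - 13 / (n + 1) + 60 / (n + 1)^2 \<le> ((n + 10) / (n + 11))^13"
proof -
  have "1 - 13 / (n + 1) + 60 / (n + 1)^2 \<le> 1 + 13 * (-1 / (n + 11))"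
  proof -
    have "60 * (n + 11) * (n + 1) \<le> 130 * (n + 1) * (n + 1)"
      using assms by (intro mult_right_mono) auto
    then have "60 * ((n + 1) * (n + 11)) \<le> 130 * (n + 1)^2"
      by (simp add: power2_eq_square algebra_simps)
    then have "60 / (n + 1)^2 \<le> 130 / ((n + 1) * (n + 11))"
      using assms by (simp add: divide_simps)
    moreover have "13 / (n + 1) - 13 / (n + 11) = 130 / ((n + 1) * (n + 11))"
      using assms by (simp add: field_simps)
    ultimately show ?thesis by simp
  qed
  also have "\<dots> \<le> (1 + (-1 / (n + 11)))^13"
    using Bernoulli_inequality[of "-1 / (n + 11)" 13] assms by (simp add: field_simps)
  also have "1 + (-1 / (n + 11)) = (n + 10) / (n + 11)"
    using assms by (simp add: field_simps)
  finally show ?thesis .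
qed

lemma power_decay_of_recurrence:
  fixes q :: "nat \<Rightarrow> real"
  assumes step: "\<And>n. n \<ge> n\<^sub>0 \<Longrightarrow> q (Suc n) = (1 - 13 / real (Suc n) + 60 / real (Suc n)^2) * q n"
    and nonneg: "\<And>n. q n \<ge> 0"
  shows "\<exists>K\<ge>0. \<forall>n\<ge>max n\<^sub>0 8. q n \<le> K / real n ^ 13"
proof -
  let ?n1 = "max n\<^sub>0 8"
  have mono: "q (Suc n) * (real (Suc n) + 10)^13 \<le> q n * (real n + 10)^13" if "n \<ge> ?n1" for n
  proof -
    have "q (Suc n) \<le> ((real n + 10) / (real n + 11))^13 * q n"
      using step[of n] bernoulli_thirteen[of "real n"] nonneg[of n] that
      by (simp add: add.commute mult_right_mono)
    then have "q (Suc n) * (real n + 11)^13 \<le> ((real n + 10) / (real n + 11))^13 * q n * (real n + 11)^13"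
      by (rule mult_right_mono) simp
    also have "\<dots> = q n * (real n + 10)^13"
      by (simp add: power_divide)
    finally show ?thesis by (simp add: add.commute)
  qed
  define K where "K = q ?n1 * (real ?n1 + 10)^13"
  have bound: "q n * (real n + 10)^13 \<le> K" if "n \<ge> ?n1" for n
    using that
  proof (induction n rule: dec_induct)
    case (step n)
    with mono show ?case by (meson order.trans)
  qed (simp add: K_def)
  have "q n \<le> K / real n ^ 13" if "n \<ge> ?n1" for n
  proof -
    have "q n \<le> K / (real n + 10)^13"
      using bound[OF that] by (simp add: field_simps)
    also have "\<dots> \<le> K / real n ^ 13"
      using that nonneg[of ?n1] by (intro divide_left_mono) (auto simp: K_def intro: power_mono)
    finally show ?thesis .
  qed
  moreover have "K \<ge> 0" using nonneg by (simp add: K_def)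
  ultimately show ?thesis by blast
qed

text \<open>The deviation from the fixed point \<open>(5, 3, 2) (n + 1) / 37\<close> has two free coordinates \<open>x, y\<close>
  (the third is fixed by the linear invariant); the positive definite form \<open>6x\<^sup>2 + 10xy + 16y\<^sup>2\<close>
  is multiplied by exactly \<open>1 - 13/(n + 1) + 60/(n + 1)\<^sup>2\<close> in each step.\<close>
lemma quadratic_form_step:
  fixes x y j :: real
  assumes "j \<noteq> 0"
  shows "6 * (x + (-9*x - 8*y)/j)^2 + 10 * (x + (-9*x - 8*y)/j) * (y + (3*x - 4*y)/j) +
      16 * (y + (3*x - 4*y)/j)^2 = (1 - 13/j + 60/j^2) * (6*x^2 + 10*x*y + 16*y^2)"
  using assms by (simp add: field_simps power2_eq_square)

lemma powr_thirteen_halves: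
  fixes x :: real
  assumes "x > 0"
  shows "(x powr (-13/2))^2 = 1 / x ^ 13"
proof -
  have "(x powr (-13/2))^2 = x powr (-13/2) * x powr (-13/2)" by (simp add: power2_eq_square)
  also have "\<dots> = x powr (-13)" by (simp add: powr_add[symmetric])
  also have "\<dots> = 1 / x ^ 13" using assms by (simp add: powr_minus divide_inverse powr_numeral)
  finally show ?thesis .
qed

lemma urn_asymptotics:
  fixes a b c :: "nat \<Rightarrow> real"
  assumes rec_a: "\<And>n. n \<ge> n\<^sub>0 \<Longrightarrow> a (Suc n) = a n + (10 * c n - 3 * a n) / real (Suc n)"
    and rec_b: "\<And>n. n \<ge> n\<^sub>0 \<Longrightarrow> b (Suc n) = b n + (3 * a n - 4 * b n) / real (Suc n)"
    and total: "\<And>n. n \<ge> n\<^sub>0 \<Longrightarrow> 3 * a n + 4 * b n + 5 * c n = real n + 1"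
  shows "(\<lambda>n. a n + b n + c n - 10 * (real n + 1) / 37) \<in> O(\<lambda>n. real n powr (-13/2))"
proof -
  define x where "x n = a n - 5 * (real n + 1) / 37" for n
  define y where "y n = b n - 3 * (real n + 1) / 37" for n
  define q where "q n = 6 * (x n)^2 + 10 * x n * y n + 16 * (y n)^2" for n
  have c: "c n = 2 * (real n + 1) / 37 - (3 * x n + 4 * y n) / 5" if "n \<ge> n\<^sub>0" for n
    using total[OF that] by (simp add: x_def y_def field_simps)
  have "q (Suc n) = (1 - 13 / real (Suc n) + 60 / real (Suc n)^2) * q n" if "n \<ge> n\<^sub>0" for n
  proof -
    have x: "x (Suc n) = x n + (-9 * x n - 8 * y n) / real (Suc n)"
      using rec_a[OF that] c[OF that] by (simp add: x_def field_simps)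
    have y: "y (Suc n) = y n + (3 * x n - 4 * y n) / real (Suc n)"
      using rec_b[OF that] by (simp add: x_def y_def field_simps)
    show ?thesis
      unfolding q_def x y by (rule quadratic_form_step) simp
  qed
  moreover have q_eq: "q n = (2 * x n + y n)^2 + 2 * (x n + 3/2 * y n)^2 + 21/2 * (y n)^2" for n
    by (simp add: q_def power2_eq_square algebra_simps)
  then have "q n \<ge> 0" for n by simp
  ultimately obtain K where "K \<ge> 0" and K: "\<forall>n\<ge>max n\<^sub>0 8. q n \<le> K / real n ^ 13"
    using power_decay_of_recurrence[of n\<^sub>0 q] by blast
  have "\<bar>a n + b n + c n - 10 * (real n + 1) / 37\<bar> \<le> sqrt K * \<bar>real n powr (-13/2)\<bar>"
    if "n \<ge> max n\<^sub>0 8" for n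
  proof -
    have "a n + b n + c n - 10 * (real n + 1) / 37 = (2 * x n + y n) / 5"
      using c[of n] that by (simp add: x_def y_def field_simps)
    then have "(a n + b n + c n - 10 * (real n + 1) / 37)^2 = (2 * x n + y n)^2 / 25"
      by (simp only: power_divide) simp
    also have "\<dots> \<le> (2 * x n + y n)^2" by simp
    also have "\<dots> \<le> q n" unfolding q_eq by simp
    also have "\<dots> \<le> K / real n ^ 13" using K that by simp
    also have "\<dots> = K * (real n powr (-13/2))^2"
      using that powr_thirteen_halves[of "real n"] by simp
    also have "\<dots> = (sqrt K * \<bar>real n powr (-13/2)\<bar>)^2"
      using \<open>K \<ge> 0\<close> by (simp add: power_mult_distrib)
    finally have "\<bar>a n + b n + c n - 10 * (real n + 1) / 37\<bar>^2 \<le> (sqrt K * \<bar>real n powr (-13/2)\<bar>)^2"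
      by (simp only: power2_abs)
    then show ?thesis
      by (rule power2_le_imp_le) (use \<open>K \<ge> 0\<close> in simp)
  qed
  then show ?thesis
    by (intro bigoI[where c = "sqrt K"]) (auto simp: eventually_at_top_linorder intro!: exI[of _ "max n\<^sub>0 8"])
qed

section \<open>B-trees of order 5\<close>

lemma leaf_flux_order_five:
  "leaf_flux 2 2 2 = -3" "leaf_flux 2 2 3 = 0" "leaf_flux 2 2 4 = 10"
  "leaf_flux 2 3 2 = 3" "leaf_flux 2 3 3 = -4" "leaf_flux 2 3 4 = 0"
  by (simp_all add: leaf_flux_def)

theorem mainTheorem11:
  shows "(\<lambda>N. expected_leaves 2 N - 10 * (real N + 1) / 37) \<in> O(\<lambda>N. real N powr (-13/2))"
proof -
  let ?E = "\<lambda>k. expected_leaf_count 2 k"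
  have sizes: "{2..4} = {2, 3, 4 :: nat}" by auto
  have "(\<lambda>N. ?E 2 N + ?E 3 N + ?E 4 N - 10 * (real N + 1) / 37) \<in> O(\<lambda>N. real N powr (-13/2))"
  proof (rule urn_asymptotics[where n\<^sub>0 = 5])
    fix n :: nat assume "5 \<le> n"
    then show "?E 2 (Suc n) = ?E 2 n + (10 * ?E 4 n - 3 * ?E 2 n) / real (Suc n)"
      and "?E 3 (Suc n) = ?E 3 n + (3 * ?E 2 n - 4 * ?E 3 n) / real (Suc n)"
      by (simp_all add: expected_leaf_count_Suc sizes leaf_flux_order_five)
    show "3 * ?E 2 n + 4 * ?E 3 n + 5 * ?E 4 n = real n + 1"
      using weighted_sum_expected_leaf_count[of 2 n] \<open>5 \<le> n\<close> by (simp add: sizes algebra_simps)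
  qed
  moreover have "eventually (\<lambda>N. ?E 2 N + ?E 3 N + ?E 4 N = expected_leaves 2 N) at_top"
    using eventually_ge_at_top[of 5]
    by eventually_elim (simp add: expected_leaves_eq_sum_expected_leaf_count sizes)
  ultimately show ?thesis
    by (subst (asm) landau_o.big.in_cong) (auto elim: eventually_mono)
qed

end
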